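(* Let $\alpha,\beta$ be linear subspaces of $\mathbb{R}^n$ with $\dim\alpha<\dim\beta$. Then for any $d>1$ and $C_1,C_2>0$, $$\lim_{\epsilon\to0}\frac{\mathrm{Vol}(ST_d(\alpha;C_1)\cap B_\epsilon(0))}{\mathrm{Vol}(ST_d(\beta;C_2)\cap B_\epsilon(0))}=0.$$
   Context: Sea-tangle neighbourhood: $ST_d(X;C)=\{x\in\mathbb{R}^n : \mathrm{dist}(x,X)\le C|x|^d\}$. $B_\epsilon(0)$ is the ball of radius $\epsilon$ centred at $0$ and $\mathrm{Vol}$ is Lebesgue measure on $\mathbb{R}^n$. *)

theory Defs
  imports "HOL-Analysis.Analysis"
begin

definition sea_tangle :: "real \<Rightarrow> 'a::euclidean_space set \<Rightarrow> real \<Rightarrow> 'a set" where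
  "sea_tangle d X C = {x. infdist x X \<le> C * norm x powr d}"

end

theory Submission
  imports Defs
begin

(* Near the origin, ST_d(X;C) for a k-dimensional subspace X is squeezed between two unions of
   balls of radius comparable to eps^d.  Inside B_eps it lies in the (C eps^d)-tube around X,
   which a grid in X covers by O((eps / eps^d)^k) balls of radius O(eps^d).  Conversely, if k > 0,
   it contains the pairwise disjoint balls of radius (C / 4^d) eps^d around about (eps / eps^d)^k
   well-separated grid points of X in the annulus eps/2 <= |x| <= 3 eps/4, since every point of
   such a ball has norm at least eps/4.  So the volume has exact order eps^k (eps^d)^(n-k), and for
   dim alpha = k < m = dim beta the ratio is O((eps^(d-1))^(m-k)), which tends to 0 as d > 1. *)

lemma orthonormal_sum_inner:
  fixes B :: "'a::euclidean_space set"
  assumes "finite B" "pairwise orthogonal B" "\<And>b. b \<in> B \<Longrightarrow> norm b = 1" "b0 \<in> B"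
  shows "(\<Sum>b\<in>B. c b *\<^sub>R b) \<bullet> b0 = c b0"
proof -
  have "(\<Sum>b\<in>B. c b *\<^sub>R b) \<bullet> b0 = (\<Sum>b\<in>B. c b * (b \<bullet> b0))"
    by (simp add: inner_sum_left)
  also have "\<dots> = c b0 * (b0 \<bullet> b0) + (\<Sum>b\<in>B-{b0}. c b * (b \<bullet> b0))"
    using assms by (simp add: sum.remove)
  also have "(\<Sum>b\<in>B-{b0}. c b * (b \<bullet> b0)) = 0"
    using assms(2,4) by (intro sum.neutral) (auto simp: pairwise_def orthogonal_def)
  also have "b0 \<bullet> b0 = 1"
    using assms(3)[OF assms(4)] by (simp add: norm_eq_sqrt_inner)
  finally show ?thesis by simp
qed

lemma orthonormal_span_expansion:
  fixes B :: "'a::euclidean_space set"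
  assumes "finite B" "pairwise orthogonal B" "\<And>b. b \<in> B \<Longrightarrow> norm b = 1" "y \<in> span B"
  shows "y = (\<Sum>b\<in>B. (y \<bullet> b) *\<^sub>R b)"
proof -
  obtain c where c: "y = (\<Sum>b\<in>B. c b *\<^sub>R b)"
    using assms(4) span_finite[OF assms(1)] by auto
  then have "\<And>b. b \<in> B \<Longrightarrow> y \<bullet> b = c b"
    using orthonormal_sum_inner[OF assms(1-3)] by simp
  then show ?thesis
    using c by (metis (no_types, lifting) sum.cong)
qed

lemma abs_inner_unit_le_norm:
  fixes x b :: "'a::euclidean_space"
  assumes "norm b = 1"
  shows "\<bar>x \<bullet> b\<bar> \<le> norm x"
  using Cauchy_Schwarz_ineq2[of x b] assms by simp

lemma norm_add_scaleR_unit_bounds: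
  fixes b p :: "'a::euclidean_space" and a :: real
  assumes "norm b = 1" "0 \<le> a" "0 \<le> p \<bullet> b"
  shows "a \<le> norm (a *\<^sub>R b + p)" and "norm (a *\<^sub>R b + p) \<le> a + norm p"
proof -
  have "a \<le> (a *\<^sub>R b + p) \<bullet> b"
    using assms by (simp add: inner_add_left norm_eq_1)
  also have "\<dots> \<le> norm (a *\<^sub>R b + p)"
    using abs_inner_unit_le_norm[OF assms(1), of "a *\<^sub>R b + p"] by linarith
  finally show "a \<le> norm (a *\<^sub>R b + p)" .
  show "norm (a *\<^sub>R b + p) \<le> a + norm p"
    using norm_triangle_ineq[of "a *\<^sub>R b" p] assms(1,2) by simp
qed

lemma orthonormal_coeff_diff_le_dist:
  fixes B :: "'a::euclidean_space set"
  assumes "finite B" "pairwise orthogonal B" "\<And>b. b \<in> B \<Longrightarrow> norm b = 1" "b0 \<in> B"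
  shows "\<bar>c b0 - c' b0\<bar> \<le> dist (\<Sum>b\<in>B. c b *\<^sub>R b) (\<Sum>b\<in>B. c' b *\<^sub>R b)"
proof -
  have "(\<Sum>b\<in>B. c b *\<^sub>R b) - (\<Sum>b\<in>B. c' b *\<^sub>R b) = (\<Sum>b\<in>B. (c b - c' b) *\<^sub>R b)"
    by (simp add: scaleR_diff_left sum_subtractf)
  then have "\<bar>c b0 - c' b0\<bar> = \<bar>((\<Sum>b\<in>B. c b *\<^sub>R b) - (\<Sum>b\<in>B. c' b *\<^sub>R b)) \<bullet> b0\<bar>"
    using orthonormal_sum_inner[OF assms] by simp
  also have "\<dots> \<le> dist (\<Sum>b\<in>B. c b *\<^sub>R b) (\<Sum>b\<in>B. c' b *\<^sub>R b)"
    unfolding dist_norm by (rule abs_inner_unit_le_norm[OF assms(3)[OF assms(4)]])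
  finally show ?thesis .
qed

lemma abs_round_le_ceiling:
  fixes x R :: real
  assumes "\<bar>x\<bar> \<le> R"
  shows "\<bar>round x\<bar> \<le> \<lceil>R\<rceil>"
proof -
  have "\<bar>of_int (round x)\<bar> < real_of_int \<lceil>R\<rceil> + 1"
    using of_int_round_abs_le[of x] le_of_int_ceiling[of R] assms by linarith
  then show ?thesis by linarith
qed

lemma orthonormal_round_dist_le:
  fixes B :: "'a::euclidean_space set" and \<delta> :: real
  assumes B: "finite B" "pairwise orthogonal B" "\<And>b. b \<in> B \<Longrightarrow> norm b = 1"
    and "y \<in> span B" "0 < \<delta>"
  shows "dist y (\<Sum>b\<in>B. (\<delta> * of_int (round (y \<bullet> b / \<delta>))) *\<^sub>R b) \<le> card B * \<delta> / 2"
proof -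
  have round_err: "\<bar>y \<bullet> b - \<delta> * of_int (round (y \<bullet> b / \<delta>))\<bar> \<le> \<delta> / 2" for b
  proof -
    have "y \<bullet> b - \<delta> * of_int (round (y \<bullet> b / \<delta>)) = \<delta> * (y \<bullet> b / \<delta> - of_int (round (y \<bullet> b / \<delta>)))"
      using \<open>0 < \<delta>\<close> by (simp add: algebra_simps)
    then show ?thesis
      using of_int_round_abs_le[of "y \<bullet> b / \<delta>"] \<open>0 < \<delta>\<close> by (simp add: abs_mult abs_minus_commute)
  qed
  have "y - (\<Sum>b\<in>B. (\<delta> * of_int (round (y \<bullet> b / \<delta>))) *\<^sub>R b)
      = (\<Sum>b\<in>B. (y \<bullet> b - \<delta> * of_int (round (y \<bullet> b / \<delta>))) *\<^sub>R b)"
    using orthonormal_span_expansion[OF B \<open>y \<in> span B\<close>]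
    by (simp add: scaleR_diff_left sum_subtractf)
  then have "dist y (\<Sum>b\<in>B. (\<delta> * of_int (round (y \<bullet> b / \<delta>))) *\<^sub>R b)
      \<le> (\<Sum>b\<in>B. norm ((y \<bullet> b - \<delta> * of_int (round (y \<bullet> b / \<delta>))) *\<^sub>R b))"
    by (simp only: dist_norm) (rule norm_sum)
  also have "\<dots> \<le> (\<Sum>b\<in>B. \<delta> / 2)"
    using round_err B(3) by (intro sum_mono) simp
  finally show ?thesis
    by simp
qed

lemma orthonormal_grid_separated:
  fixes B :: "'a::euclidean_space set" and s :: real and z w :: "'a \<Rightarrow> nat"
  assumes B: "finite B" "pairwise orthogonal B" "\<And>b. b \<in> B \<Longrightarrow> norm b = 1"
    and "0 < s" "z \<in> extensional B" "w \<in> extensional B" "z \<noteq> w"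
  shows "s \<le> dist (\<Sum>b\<in>B. (s * real (z b)) *\<^sub>R b) (\<Sum>b\<in>B. (s * real (w b)) *\<^sub>R b)"
proof -
  have "\<exists>b\<in>B. z b \<noteq> w b"
  proof (rule ccontr)
    assume "\<not> (\<exists>b\<in>B. z b \<noteq> w b)"
    then have "z = w"
      using assms(5,6) by (intro extensionalityI) auto
    with \<open>z \<noteq> w\<close> show False ..
  qed
  then obtain b where b: "b \<in> B" "z b \<noteq> w b" ..
  then have "s \<le> \<bar>s * real (z b) - s * real (w b)\<bar>"
    using \<open>0 < s\<close> by (simp add: abs_mult flip: right_diff_distrib)
  also have "\<dots> \<le> dist (\<Sum>b\<in>B. (s * real (z b)) *\<^sub>R b) (\<Sum>b\<in>B. (s * real (w b)) *\<^sub>R b)"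
    using B b(1) by (rule orthonormal_coeff_diff_le_dist)
  finally show ?thesis .
qed

lemma orthonormal_grid_packing:
  fixes B :: "'a::euclidean_space set" and s :: real
  assumes B: "finite B" "pairwise orthogonal B" "\<And>b. b \<in> B \<Longrightarrow> norm b = 1" and "0 < s"
  obtains P where "finite P" "P \<subseteq> span B" "card P = N ^ card B"
    and "\<And>p. p \<in> P \<Longrightarrow> norm p \<le> card B * s * N"
    and "\<And>p b. p \<in> P \<Longrightarrow> b \<in> B \<Longrightarrow> 0 \<le> p \<bullet> b"
    and "\<And>p q. p \<in> P \<Longrightarrow> q \<in> P \<Longrightarrow> p \<noteq> q \<Longrightarrow> s \<le> dist p q"
proof -
  define Z where "Z = PiE B (\<lambda>_. {..<N})"
  define g where "g z = (\<Sum>b\<in>B. (s * real (z b)) *\<^sub>R b)" for z :: "'a \<Rightarrow> nat"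
  have sep: "s \<le> dist (g z) (g w)" if "z \<in> Z" "w \<in> Z" "z \<noteq> w" for z w
    using that unfolding g_def Z_def by (intro orthonormal_grid_separated[OF B \<open>0 < s\<close>]) (auto simp: PiE_iff)
  have "inj_on g Z"
    using sep \<open>0 < s\<close> by (intro inj_onI) force
  show ?thesis
  proof
    show "finite (g ` Z)"
      unfolding Z_def using B(1) by (simp add: finite_PiE)
    have "g z \<in> span B" for z
      unfolding g_def by (intro span_sum span_scale span_base)
    then show "g ` Z \<subseteq> span B"
      by auto
    show "card (g ` Z) = N ^ card B"
      using \<open>inj_on g Z\<close> B(1) unfolding Z_def by (simp add: card_image card_PiE)
  next
    fix p assume "p \<in> g ` Z"
    then obtain z where z: "z \<in> Z" "p = g z" by blast
    have "norm p \<le> (\<Sum>b\<in>B. norm ((s * real (z b)) *\<^sub>R b))"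
      unfolding z(2) g_def by (rule norm_sum)
    also have "\<dots> \<le> (\<Sum>b\<in>B. s * N)"
    proof (intro sum_mono)
      fix b assume "b \<in> B"
      then have "z b < N"
        using z(1) unfolding Z_def by auto
      then show "norm ((s * real (z b)) *\<^sub>R b) \<le> s * N"
        using B(3)[OF \<open>b \<in> B\<close>] \<open>0 < s\<close> by simp
    qed
    finally show "norm p \<le> card B * s * N"
      by simp
    show "0 \<le> p \<bullet> b" if "b \<in> B" for b
      unfolding z(2) g_def using orthonormal_sum_inner[OF B that] \<open>0 < s\<close> by simp
  next
    show "s \<le> dist p q" if "p \<in> g ` Z" "q \<in> g ` Z" "p \<noteq> q" for p q
      using that sep by blast
  qed
qed

lemma measure_le_of_subset_fmeasurable:
  assumes "A \<subseteq> B" "B \<in> fmeasurable M"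
  shows "measure M A \<le> measure M B"
proof (cases "A \<in> sets M")
  case True
  then show ?thesis using assms measure_mono_fmeasurable by blast
next
  case False
  then show ?thesis by (simp add: measure_notin_sets)
qed

lemma measure_le_card_cball_cover:
  fixes P :: "'a::euclidean_space set"
  assumes "finite P" "R \<ge> 0" "A \<subseteq> (\<Union>p\<in>P. cball p R)"
  shows "measure lebesgue A \<le> card P * (unit_ball_vol DIM('a) * R ^ DIM('a))"
proof -
  have "measure lebesgue A \<le> measure lebesgue (\<Union>p\<in>P. cball p R)"
    using assms by (intro measure_le_of_subset_fmeasurable fmeasurable.finite_UN) auto
  also have "\<dots> \<le> (\<Sum>p\<in>P. measure lebesgue (cball p R))"
    using assms(1) by (intro measure_UNION_le) auto
  finally show ?thesis
    by (simp add: content_cball[OF assms(2)])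
qed

lemma card_ball_packing_le_measure:
  fixes P :: "'a::euclidean_space set"
  assumes "finite P" "r \<ge> 0" "\<And>p q. p \<in> P \<Longrightarrow> q \<in> P \<Longrightarrow> p \<noteq> q \<Longrightarrow> 2 * r \<le> dist p q"
    and "(\<Union>p\<in>P. ball p r) \<subseteq> A" "A \<in> lmeasurable"
  shows "card P * (unit_ball_vol DIM('a) * r ^ DIM('a)) \<le> measure lebesgue A"
proof -
  have "disjoint_family_on (\<lambda>p. ball p r) P"
    unfolding disjoint_family_on_def
  proof (intro ballI impI)
    fix p q assume "p \<in> P" "q \<in> P" "p \<noteq> q"
    then have "2 * r \<le> dist p q" by (rule assms(3))
    then have "\<not> (dist p x < r \<and> dist q x < r)" for x
      using dist_triangle2[of p q x] by linarith
    then show "ball p r \<inter> ball q r = {}" by auto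
  qed
  then have "measure lebesgue (\<Union>p\<in>P. ball p r) = (\<Sum>p\<in>P. measure lebesgue (ball p r))"
    using assms(1) by (intro measure_finite_Union) (use emeasure_lborel_ball_finite less_top in auto)
  also have "\<dots> = card P * (unit_ball_vol DIM('a) * r ^ DIM('a))"
    by (simp add: content_ball[OF assms(2)])
  moreover have "measure lebesgue (\<Union>p\<in>P. ball p r) \<le> measure lebesgue A"
    using assms(1,4,5) by (intro measure_mono_fmeasurable fmeasurableD fmeasurable.finite_UN) auto
  ultimately show ?thesis by simp
qed

lemma orthonormal_grid_net:
  fixes B :: "'a::euclidean_space set" and \<delta> R :: real
  assumes B: "finite B" "pairwise orthogonal B" "\<And>b. b \<in> B \<Longrightarrow> norm b = 1"
    and "0 < \<delta>" "0 \<le> R"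
  obtains P where "finite P" "card P \<le> (2 * R / \<delta> + 3) ^ card B"
    and "\<And>y. y \<in> span B \<Longrightarrow> norm y \<le> R \<Longrightarrow> \<exists>p\<in>P. dist y p \<le> card B * \<delta> / 2"
proof -
  define M where "M = \<lceil>R / \<delta>\<rceil>"
  define Z where "Z = PiE B (\<lambda>_. {-M..M})"
  define g where "g z = (\<Sum>b\<in>B. (\<delta> * of_int (z b)) *\<^sub>R b)" for z :: "'a \<Rightarrow> int"
  have "finite Z"
    unfolding Z_def using B(1) by (simp add: finite_PiE)
  show ?thesis
  proof
    show "finite (g ` Z)"
      using \<open>finite Z\<close> by simp
    have "0 \<le> M" "real_of_int M \<le> R / \<delta> + 1"
      using assms of_int_ceiling_le_add_one[of "R / \<delta>"] unfolding M_def
      by (simp_all add: ceiling_mono[of 0, simplified])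
    then have "real (card Z) \<le> (2 * R / \<delta> + 3) ^ card B"
      unfolding Z_def using B(1) by (simp add: card_PiE) (intro power_mono; simp)
    then show "card (g ` Z) \<le> (2 * R / \<delta> + 3) ^ card B"
      using card_image_le[OF \<open>finite Z\<close>, of g] by linarith
  next
    fix y assume y: "y \<in> span B" "norm y \<le> R"
    have "round (y \<bullet> b / \<delta>) \<in> {-M..M}" if "b \<in> B" for b
    proof -
      have "\<bar>y \<bullet> b / \<delta>\<bar> \<le> R / \<delta>"
        using abs_inner_unit_le_norm[OF B(3)[OF that], of y] y(2) \<open>0 < \<delta>\<close>
        by (simp add: abs_divide divide_right_mono)
      then have "\<bar>round (y \<bullet> b / \<delta>)\<bar> \<le> M"
        unfolding M_def by (rule abs_round_le_ceiling)
      then show ?thesis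
        by (simp add: abs_le_iff; linarith)
    qed
    then have "(\<lambda>b\<in>B. round (y \<bullet> b / \<delta>)) \<in> Z"
      unfolding Z_def by simp
    moreover have "dist y (g (\<lambda>b\<in>B. round (y \<bullet> b / \<delta>))) \<le> card B * \<delta> / 2"
      using orthonormal_round_dist_le[OF B y(1) \<open>0 < \<delta>\<close>] unfolding g_def by simp
    ultimately show "\<exists>p\<in>g ` Z. dist y p \<le> card B * \<delta> / 2"
      by blast
  qed
qed

lemma subspace_grid_net:
  fixes S :: "'a::euclidean_space set" and \<delta> R :: real
  assumes S: "subspace S" and "0 < \<delta>" "0 \<le> R"
  obtains P where "finite P" "card P \<le> (2 * R / \<delta> + 3) ^ dim S"
    and "\<And>y. y \<in> S \<Longrightarrow> norm y \<le> R \<Longrightarrow> \<exists>p\<in>P. dist y p \<le> dim S * \<delta> / 2"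
proof -
  obtain B where B: "pairwise orthogonal B" "\<And>b. b \<in> B \<Longrightarrow> norm b = 1"
    "independent B" "card B = dim S" "span B = S"
    using orthonormal_basis_subspace[OF S] by metis
  then have "finite B"
    using independent_imp_finite by blast
  then obtain P where "finite P" "card P \<le> (2 * R / \<delta> + 3) ^ card B"
    and "\<And>y. y \<in> span B \<Longrightarrow> norm y \<le> R \<Longrightarrow> \<exists>p\<in>P. dist y p \<le> card B * \<delta> / 2"
    using orthonormal_grid_net[OF _ B(1,2) assms(2,3)] by blast
  then show ?thesis
    unfolding B(4,5) by (rule that)
qed

lemma subspace_tube_cball_cover:
  fixes S :: "'a::euclidean_space set" and \<delta> \<epsilon> :: real
  assumes S: "subspace S" and "0 < \<delta>" "\<delta> \<le> \<epsilon>"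
  obtains P where "finite P" "card P \<le> (7 * \<epsilon> / \<delta>) ^ dim S"
    and "{x. infdist x S \<le> \<delta> \<and> norm x < \<epsilon>} \<subseteq> (\<Union>p\<in>P. cball p ((dim S + 1) * \<delta>))"
proof -
  obtain P where P: "finite P" "card P \<le> (2 * (2 * \<epsilon>) / \<delta> + 3) ^ dim S"
    and net: "\<And>y. y \<in> S \<Longrightarrow> norm y \<le> 2 * \<epsilon> \<Longrightarrow> \<exists>p\<in>P. dist y p \<le> dim S * \<delta> / 2"
    using subspace_grid_net[OF S \<open>0 < \<delta>\<close>, of "2 * \<epsilon>"] assms by auto
  have "card P \<le> (7 * \<epsilon> / \<delta>) ^ dim S"
  proof -
    have "2 * (2 * \<epsilon>) / \<delta> + 3 \<le> 7 * \<epsilon> / \<delta>"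
      using assms by (simp add: field_simps)
    then show ?thesis
      using order_trans[OF P(2) power_mono] \<open>0 < \<delta>\<close> \<open>\<delta> \<le> \<epsilon>\<close> by simp
  qed
  moreover have "{x. infdist x S \<le> \<delta> \<and> norm x < \<epsilon>} \<subseteq> (\<Union>p\<in>P. cball p ((dim S + 1) * \<delta>))"
  proof
    fix x assume "x \<in> {x. infdist x S \<le> \<delta> \<and> norm x < \<epsilon>}"
    then have x: "infdist x S \<le> \<delta>" "norm x < \<epsilon>"
      by auto
    obtain y where y: "y \<in> S" "dist x y \<le> \<delta>"
      using infdist_attains_inf[OF closed_subspace[OF S], of x] subspace_0[OF S] x(1) by force
    have "norm y \<le> 2 * \<epsilon>"
      using norm_triangle_sub[of y x] x(2) y(2) \<open>\<delta> \<le> \<epsilon>\<close>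
      by (simp add: dist_norm norm_minus_commute)
    then obtain p where "p \<in> P" "dist y p \<le> dim S * \<delta> / 2"
      using net y(1) by blast
    moreover have "dist p x \<le> dist x y + dist y p"
      using dist_triangle[of x p y] by (simp add: dist_commute)
    moreover have "(dim S + 1) * \<delta> = dim S * \<delta> + \<delta>" "0 \<le> dim S * \<delta>"
      using \<open>0 < \<delta>\<close> by (simp_all add: algebra_simps)
    ultimately have "dist p x \<le> (dim S + 1) * \<delta>"
      using y(2) by linarith
    then show "x \<in> (\<Union>p\<in>P. cball p ((dim S + 1) * \<delta>))"
      using \<open>p \<in> P\<close> by auto
  qed
  ultimately show ?thesis
    using P(1) that by blast
qed

lemma measure_subspace_tube_le:
  fixes S :: "'a::euclidean_space set" and \<delta> \<epsilon> :: real
  assumes S: "subspace S" and "0 < \<delta>" "\<delta> \<le> \<epsilon>"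
    and "A \<subseteq> {x. infdist x S \<le> \<delta> \<and> norm x < \<epsilon>}"
  shows "measure lebesgue A
    \<le> (7 * \<epsilon> / \<delta>) ^ dim S * (unit_ball_vol DIM('a) * ((dim S + 1) * \<delta>) ^ DIM('a))"
proof -
  obtain P where P: "finite P" "card P \<le> (7 * \<epsilon> / \<delta>) ^ dim S"
    and cover: "{x. infdist x S \<le> \<delta> \<and> norm x < \<epsilon>} \<subseteq> (\<Union>p\<in>P. cball p ((dim S + 1) * \<delta>))"
    using subspace_tube_cball_cover[OF assms(1-3)] by blast
  have "measure lebesgue A \<le> card P * (unit_ball_vol DIM('a) * ((dim S + 1) * \<delta>) ^ DIM('a))"
    using P(1) \<open>0 < \<delta>\<close> cover assms(4) by (intro measure_le_card_cball_cover) auto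
  also have "\<dots> \<le> (7 * \<epsilon> / \<delta>) ^ dim S * (unit_ball_vol DIM('a) * ((dim S + 1) * \<delta>) ^ DIM('a))"
    using P(2) \<open>0 < \<delta>\<close> by (intro mult_right_mono) auto
  finally show ?thesis .
qed

lemma subspace_annulus_packing:
  fixes S :: "'a::euclidean_space set" and r \<epsilon> :: real
  assumes S: "subspace S" and "0 < dim S" "0 < r" "16 * dim S * r \<le> \<epsilon>"
  obtains P where "finite P" "P \<subseteq> S"
    and "\<And>p. p \<in> P \<Longrightarrow> \<epsilon> / 2 \<le> norm p \<and> norm p \<le> 3 * \<epsilon> / 4"
    and "\<And>p q. p \<in> P \<Longrightarrow> q \<in> P \<Longrightarrow> p \<noteq> q \<Longrightarrow> 2 * r \<le> dist p q"
    and "(\<epsilon> / (16 * dim S * r)) ^ dim S \<le> card P"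
proof -
  obtain B where B: "pairwise orthogonal B" "\<And>b. b \<in> B \<Longrightarrow> norm b = 1"
    "independent B" "card B = dim S" "span B = S"
    using orthonormal_basis_subspace[OF S] by metis
  have "finite B"
    using B(3) independent_imp_finite by blast
  obtain b0 where "b0 \<in> B"
    using B(4) \<open>0 < dim S\<close> by (metis card.empty equals0I less_irrefl)
  have "0 < 16 * real (dim S) * r"
    using assms(2,3) by simp
  then have "0 < \<epsilon>"
    using assms(4) by linarith
  define q where "q = \<epsilon> / (8 * dim S * r)"
  have "2 \<le> q" "\<epsilon> / (16 * dim S * r) = q / 2"
    using assms unfolding q_def by (simp_all add: field_simps)
  define N where "N = nat \<lfloor>q\<rfloor>"
  have N: "real N \<le> q" "q / 2 \<le> real N"
    using \<open>2 \<le> q\<close> unfolding N_def by linarith+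
  obtain P where P: "finite P" "P \<subseteq> span B" "card P = N ^ card B"
    and norm_P: "\<And>p. p \<in> P \<Longrightarrow> norm p \<le> card B * (2 * r) * N"
    and coord_P: "\<And>p b. p \<in> P \<Longrightarrow> b \<in> B \<Longrightarrow> 0 \<le> p \<bullet> b"
    and sep_P: "\<And>p q. p \<in> P \<Longrightarrow> q \<in> P \<Longrightarrow> p \<noteq> q \<Longrightarrow> 2 * r \<le> dist p q"
    using orthonormal_grid_packing[OF \<open>finite B\<close> B(1,2), of "2 * r" N] \<open>0 < r\<close> by auto
  have "card B * (2 * r) * N \<le> \<epsilon> / 4"
    \<comment> \<open>\<open>dim_eq_0\<close> would rewrite \<open>0 < dim S\<close> into \<open>\<not> S \<subseteq> {0}\<close>, useless to \<open>field_simps\<close>\<close>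
    using N(1) \<open>0 < dim S\<close> \<open>0 < r\<close> B(4) unfolding q_def by (simp add: field_simps del: dim_eq_0)
  define Q where "Q = (+) ((\<epsilon> / 2) *\<^sub>R b0) ` P"
  show ?thesis
  proof
    show "finite Q"
      unfolding Q_def using P(1) by simp
    show "Q \<subseteq> S"
      using P(2) \<open>b0 \<in> B\<close> unfolding Q_def B(5)[symmetric] by (auto intro: span_add span_scale span_base)
  next
    fix x assume "x \<in> Q"
    then obtain p where p: "p \<in> P" "x = (\<epsilon> / 2) *\<^sub>R b0 + p"
      unfolding Q_def by blast
    have "0 \<le> \<epsilon> / 2"
      using \<open>0 < \<epsilon>\<close> by simp
    then have "\<epsilon> / 2 \<le> norm x" "norm x \<le> \<epsilon> / 2 + norm p"
      unfolding p(2)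
      by (rule norm_add_scaleR_unit_bounds[OF B(2)[OF \<open>b0 \<in> B\<close>] _ coord_P[OF p(1) \<open>b0 \<in> B\<close>]])+
    then show "\<epsilon> / 2 \<le> norm x \<and> norm x \<le> 3 * \<epsilon> / 4"
      using norm_P[OF p(1)] \<open>card B * (2 * r) * N \<le> \<epsilon> / 4\<close> by linarith
  next
    show "2 * r \<le> dist x y" if "x \<in> Q" "y \<in> Q" "x \<noteq> y" for x y
      using that sep_P unfolding Q_def by auto
  next
    have "card Q = N ^ dim S"
      unfolding Q_def using P(3) B(4) by (simp add: card_image)
    moreover have "(\<epsilon> / (16 * dim S * r)) ^ dim S \<le> real N ^ dim S"
      using N(2) \<open>2 \<le> q\<close> \<open>\<epsilon> / (16 * dim S * r) = q / 2\<close> by (intro power_mono) linarith+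
    ultimately show "(\<epsilon> / (16 * dim S * r)) ^ dim S \<le> card Q"
      by simp
  qed
qed

lemma subspace_annulus_packing_le_measure:
  fixes S :: "'a::euclidean_space set" and r \<epsilon> :: real
  assumes S: "subspace S" and "0 < dim S" "0 < r" "16 * dim S * r \<le> \<epsilon>" and "A \<in> lmeasurable"
    and balls: "\<And>p. p \<in> S \<Longrightarrow> \<epsilon> / 2 \<le> norm p \<Longrightarrow> norm p \<le> 3 * \<epsilon> / 4 \<Longrightarrow> ball p r \<subseteq> A"
  shows "(\<epsilon> / (16 * dim S * r)) ^ dim S * (unit_ball_vol DIM('a) * r ^ DIM('a)) \<le> measure lebesgue A"
proof -
  obtain P where P: "finite P" "P \<subseteq> S"
    and norm_P: "\<And>p. p \<in> P \<Longrightarrow> \<epsilon> / 2 \<le> norm p \<and> norm p \<le> 3 * \<epsilon> / 4"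
    and sep: "\<And>p q. p \<in> P \<Longrightarrow> q \<in> P \<Longrightarrow> p \<noteq> q \<Longrightarrow> 2 * r \<le> dist p q"
    and card: "(\<epsilon> / (16 * dim S * r)) ^ dim S \<le> card P"
    using subspace_annulus_packing[OF assms(1-4)] by blast
  have "(\<epsilon> / (16 * dim S * r)) ^ dim S * (unit_ball_vol DIM('a) * r ^ DIM('a))
      \<le> card P * (unit_ball_vol DIM('a) * r ^ DIM('a))"
    using card \<open>0 < r\<close> by (intro mult_right_mono) auto
  also have "\<dots> \<le> measure lebesgue A"
  proof (rule card_ball_packing_le_measure[OF P(1) _ sep _ \<open>A \<in> lmeasurable\<close>])
    show "(\<Union>p\<in>P. ball p r) \<subseteq> A"
      using balls P(2) norm_P by (meson UN_least subsetD)
  qed (use \<open>0 < r\<close> in simp)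
  finally show ?thesis .
qed

lemma closed_sea_tangle:
  fixes S :: "'a::euclidean_space set"
  assumes "0 < d"
  shows "closed (sea_tangle d S C)"
proof -
  have "continuous_on UNIV (\<lambda>x::'a. norm x powr d)"
    using assms by (intro continuous_on_powr') (auto intro: continuous_intros)
  then have "continuous_on UNIV (\<lambda>x::'a. infdist x S - C * norm x powr d)"
    by (intro continuous_on_diff continuous_on_mult continuous_on_const continuous_on_infdist
        continuous_on_id)
  then have "closed {x::'a. infdist x S - C * norm x powr d \<le> 0}"
    by (rule closed_Collect_le[OF _ continuous_on_const])
  then show ?thesis
    unfolding sea_tangle_def by simp
qed

lemma sea_tangle_Int_ball_lmeasurable:
  fixes S :: "'a::euclidean_space set"
  assumes "0 < d"
  shows "sea_tangle d S C \<inter> ball 0 \<epsilon> \<in> lmeasurable"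
proof (rule bounded_set_imp_lmeasurable)
  have "sea_tangle d S C \<inter> ball 0 \<epsilon> \<in> sets borel"
    using closed_sea_tangle[OF assms] by (intro sets.Int borel_closed borel_open) auto
  then show "sea_tangle d S C \<inter> ball 0 \<epsilon> \<in> sets lebesgue"
    by simp
qed (simp add: bounded_Int)

lemma sea_tangle_Int_ball_subset_tube:
  fixes S :: "'a::euclidean_space set"
  assumes "0 \<le> d" "0 \<le> C"
  shows "sea_tangle d S C \<inter> ball 0 \<epsilon> \<subseteq> {x. infdist x S \<le> C * \<epsilon> powr d \<and> norm x < \<epsilon>}"
proof
  fix x assume "x \<in> sea_tangle d S C \<inter> ball 0 \<epsilon>"
  then have x: "infdist x S \<le> C * norm x powr d" "norm x < \<epsilon>"
    unfolding sea_tangle_def by auto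
  have "C * norm x powr d \<le> C * \<epsilon> powr d"
    using x(2) assms by (intro mult_left_mono powr_mono2) auto
  with x show "x \<in> {x. infdist x S \<le> C * \<epsilon> powr d \<and> norm x < \<epsilon>}"
    by simp
qed

lemma ball_subset_sea_tangle_Int_ball:
  fixes S :: "'a::euclidean_space set" and d C \<epsilon> r :: real
  assumes "p \<in> S" "\<epsilon> / 2 \<le> norm p" "norm p \<le> 3 * \<epsilon> / 4"
    and "r \<le> \<epsilon> / 16" "r \<le> C * (\<epsilon> / 4) powr d" "0 \<le> d" "0 \<le> C"
  shows "ball p r \<subseteq> sea_tangle d S C \<inter> ball 0 \<epsilon>"
proof
  fix x assume "x \<in> ball p r"
  then have x: "dist p x < r"
    by simp
  have "norm x < \<epsilon>" "\<epsilon> / 4 \<le> norm x"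
    using norm_triangle_sub[of x p] norm_triangle_sub[of p x] x assms(2-4)
    by (auto simp: dist_norm norm_minus_commute)
  have "infdist x S \<le> dist x p"
    using assms(1) by (rule infdist_le)
  also have "\<dots> \<le> C * (\<epsilon> / 4) powr d"
    using x assms(5) by (simp add: dist_commute)
  also have "\<dots> \<le> C * norm x powr d"
    using \<open>\<epsilon> / 4 \<le> norm x\<close> assms(2,3,6,7) by (intro mult_left_mono powr_mono2) auto
  finally show "x \<in> sea_tangle d S C \<inter> ball 0 \<epsilon>"
    using \<open>norm x < \<epsilon>\<close> unfolding sea_tangle_def by simp
qed

lemma powr_eq_mult_powr_minus_one:
  fixes x a :: real
  assumes "0 \<le> x"
  shows "x powr a = x * x powr (a - 1)"
  using powr_mult_base[OF assms, of "a - 1"] by simp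

lemma measure_sea_tangle_Int_ball_le:
  fixes S :: "'a::euclidean_space set" and d C \<epsilon> :: real
  assumes S: "subspace S" and "0 \<le> d" "0 < C" "0 < \<epsilon>" "C * \<epsilon> powr (d - 1) \<le> 1"
  shows "measure lebesgue (sea_tangle d S C \<inter> ball 0 \<epsilon>)
    \<le> (7 / C) ^ dim S * unit_ball_vol DIM('a) * ((dim S + 1) * C) ^ DIM('a)
       * (\<epsilon> powr d) ^ DIM('a) / (\<epsilon> powr (d - 1)) ^ dim S"
proof -
  define t where "t = \<epsilon> powr (d - 1)"
  define \<delta> where "\<delta> = C * \<epsilon> powr d"
  have \<delta>: "\<delta> = C * t * \<epsilon>" "0 < t"
    unfolding \<delta>_def t_def using powr_eq_mult_powr_minus_one[of \<epsilon> d] \<open>0 < \<epsilon>\<close> by simp_all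
  have "\<delta> \<le> \<epsilon>"
    using \<open>C * \<epsilon> powr (d - 1) \<le> 1\<close> \<open>0 < \<epsilon>\<close> unfolding \<delta>(1) t_def
    by (simp add: mult_left_le_one_le)
  have "measure lebesgue (sea_tangle d S C \<inter> ball 0 \<epsilon>)
    \<le> (7 * \<epsilon> / \<delta>) ^ dim S * (unit_ball_vol DIM('a) * ((dim S + 1) * \<delta>) ^ DIM('a))"
    using assms \<delta> \<open>\<delta> \<le> \<epsilon>\<close> sea_tangle_Int_ball_subset_tube[of d C S \<epsilon>]
    by (intro measure_subspace_tube_le[OF S]) (auto simp: \<delta>_def)
  also have "\<dots> = (7 / C) ^ dim S * unit_ball_vol DIM('a) * ((dim S + 1) * C) ^ DIM('a)
       * (\<epsilon> powr d) ^ DIM('a) / t ^ dim S"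
  proof -
    define a where "a = (dim S + 1) * C"
    have "(dim S + 1) * \<delta> = a * \<epsilon> powr d"
      unfolding a_def \<delta>_def by simp
    moreover have "7 * \<epsilon> / \<delta> = 7 / C / t"
      using \<delta> \<open>0 < C\<close> \<open>0 < \<epsilon>\<close> by (simp add: field_simps)
    ultimately show ?thesis
      unfolding a_def[symmetric] by (simp add: power_mult_distrib power_divide field_simps)
  qed
  finally show ?thesis
    unfolding t_def .
qed

lemma measure_sea_tangle_Int_ball_ge:
  fixes S :: "'a::euclidean_space set" and d C c \<epsilon> :: real
  assumes S: "subspace S" and "0 < dim S" "0 < d" "0 < C" "0 < \<epsilon>"
    and "0 < c" "c \<le> C / 4 powr d" "16 * dim S * c * \<epsilon> powr (d - 1) \<le> 1"
  shows "(1 / (16 * dim S * c)) ^ dim S * unit_ball_vol DIM('a) * c ^ DIM('a)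
       * (\<epsilon> powr d) ^ DIM('a) / (\<epsilon> powr (d - 1)) ^ dim S
    \<le> measure lebesgue (sea_tangle d S C \<inter> ball 0 \<epsilon>)"
proof -
  define t where "t = \<epsilon> powr (d - 1)"
  define r where "r = c * \<epsilon> powr d"
  have r: "r = c * t * \<epsilon>" "0 < t" "0 < r"
    unfolding r_def t_def using powr_eq_mult_powr_minus_one[of \<epsilon> d] \<open>0 < \<epsilon>\<close> \<open>0 < c\<close> by simp_all
  have "16 * dim S * r \<le> \<epsilon>"
    using \<open>16 * dim S * c * \<epsilon> powr (d - 1) \<le> 1\<close> \<open>0 < \<epsilon>\<close> unfolding r(1) t_def
    by (simp add: mult_left_le_one_le mult.assoc)
  moreover have "r \<le> dim S * r"
    using \<open>0 < dim S\<close> \<open>0 < r\<close> by simp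
  ultimately have "r \<le> \<epsilon> / 16"
    by linarith
  have "r \<le> C * (\<epsilon> / 4) powr d"
    using \<open>c \<le> C / 4 powr d\<close> \<open>0 < \<epsilon>\<close> unfolding r_def
    by (simp add: powr_divide mult_right_mono divide_simps)
  have "(\<epsilon> / (16 * dim S * r)) ^ dim S * (unit_ball_vol DIM('a) * r ^ DIM('a))
      \<le> measure lebesgue (sea_tangle d S C \<inter> ball 0 \<epsilon>)"
    using sea_tangle_Int_ball_lmeasurable[OF \<open>0 < d\<close>] \<open>r \<le> \<epsilon> / 16\<close> \<open>r \<le> C * (\<epsilon> / 4) powr d\<close>
      \<open>0 < d\<close> \<open>0 < C\<close>
    by (intro subspace_annulus_packing_le_measure[OF S \<open>0 < dim S\<close> \<open>0 < r\<close> \<open>16 * dim S * r \<le> \<epsilon>\<close>]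
        ball_subset_sea_tangle_Int_ball) auto
  moreover have "(\<epsilon> / (16 * dim S * r)) ^ dim S * (unit_ball_vol DIM('a) * r ^ DIM('a))
      = (1 / (16 * dim S * c)) ^ dim S * unit_ball_vol DIM('a) * c ^ DIM('a)
        * (\<epsilon> powr d) ^ DIM('a) / t ^ dim S"
  proof -
    have "\<epsilon> / (16 * dim S * r) = 1 / (16 * dim S * c) / t"
      using r \<open>0 < \<epsilon>\<close> by (simp add: field_simps)
    then show ?thesis
      unfolding r_def by (simp add: power_mult_distrib power_divide field_simps)
  qed
  ultimately show ?thesis
    unfolding t_def by linarith
qed

lemma divide_le_of_power_bounds:
  fixes a b K1 K2 E t :: real
  assumes "0 \<le> a" "a \<le> K1 * E / t ^ k" "K2 * E / t ^ m \<le> b"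
    and "0 < K2" "0 < E" "0 < t" "k \<le> m"
  shows "a / b \<le> K1 / K2 * t ^ (m - k)"
proof -
  have "a / b \<le> (K1 * E / t ^ k) / (K2 * E / t ^ m)"
    using assms by (intro frac_le) auto
  also have "\<dots> = K1 / K2 * t ^ (m - k)"
    using assms(4-7) by (simp add: power_diff field_simps)
  finally show ?thesis .
qed

lemma tendsto_powr_at_right_0:
  fixes a :: real
  assumes "0 < a"
  shows "((\<lambda>x. x powr a) \<longlongrightarrow> 0) (at_right 0)"
proof (rule tendsto_zero_powrI)
  show "\<forall>\<^sub>F x in at_right 0. 0 \<le> (x::real)"
    using eventually_at_right_less[of 0] by eventually_elim simp
qed (use assms in \<open>auto intro: tendsto_ident_at\<close>)

lemma sea_tangle_volume_ratio_eventually_le: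
  fixes \<alpha> \<beta> :: "'a::euclidean_space set" and d C1 C2 :: real
  assumes \<alpha>: "subspace \<alpha>" and \<beta>: "subspace \<beta>" and "dim \<alpha> < dim \<beta>"
    and "1 < d" "0 < C1" "0 < C2"
  shows "\<exists>K. \<forall>\<^sub>F \<epsilon> in at_right 0.
    measure lebesgue (sea_tangle d \<alpha> C1 \<inter> ball 0 \<epsilon>) / measure lebesgue (sea_tangle d \<beta> C2 \<inter> ball 0 \<epsilon>)
      \<le> K * (\<epsilon> powr (d - 1)) ^ (dim \<beta> - dim \<alpha>)"
proof -
  define k m n where "k = dim \<alpha>" and "m = dim \<beta>" and "n = DIM('a)"
  define c where "c = C2 / 4 powr d"
  define K1 where "K1 = (7 / C1) ^ k * unit_ball_vol n * ((k + 1) * C1) ^ n"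
  define K2 where "K2 = (1 / (16 * m * c)) ^ m * unit_ball_vol n * c ^ n"
  have "0 < c" "c \<le> C2 / 4 powr d" "0 < m" "k < m"
    using assms unfolding c_def k_def m_def by auto
  then have "0 < K2"
    unfolding K2_def by simp
  have "\<forall>\<^sub>F \<epsilon> in at_right 0. \<epsilon> powr (d - 1) < min (1 / C1) (1 / (16 * m * c))"
    using \<open>0 < C1\<close> \<open>0 < c\<close> \<open>0 < m\<close> \<open>1 < d\<close>
    by (intro order_tendstoD(2)[OF tendsto_powr_at_right_0]) auto
  with eventually_at_right_less[of 0]
  have "\<forall>\<^sub>F \<epsilon> in at_right 0. 0 < \<epsilon> \<and> C1 * \<epsilon> powr (d - 1) \<le> 1 \<and> 16 * m * c * \<epsilon> powr (d - 1) \<le> 1"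
    by eventually_elim (use \<open>0 < C1\<close> \<open>0 < c\<close> \<open>0 < m\<close> in \<open>auto simp: field_simps\<close>)
  then have "\<forall>\<^sub>F \<epsilon> in at_right 0.
    measure lebesgue (sea_tangle d \<alpha> C1 \<inter> ball 0 \<epsilon>) / measure lebesgue (sea_tangle d \<beta> C2 \<inter> ball 0 \<epsilon>)
      \<le> K1 / K2 * (\<epsilon> powr (d - 1)) ^ (m - k)"
  proof eventually_elim
    case (elim \<epsilon>)
    define t where "t = \<epsilon> powr (d - 1)"
    define E where "E = (\<epsilon> powr d) ^ n"
    have upper: "measure lebesgue (sea_tangle d \<alpha> C1 \<inter> ball 0 \<epsilon>) \<le> K1 * E / t ^ k"
      using measure_sea_tangle_Int_ball_le[OF \<alpha>, of d C1 \<epsilon>] elim assms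
      unfolding K1_def E_def t_def k_def n_def by simp
    have lower: "K2 * E / t ^ m \<le> measure lebesgue (sea_tangle d \<beta> C2 \<inter> ball 0 \<epsilon>)"
      using measure_sea_tangle_Int_ball_ge[OF \<beta>, of d C2 \<epsilon> c] elim assms \<open>0 < c\<close> \<open>0 < m\<close> \<open>c \<le> C2 / 4 powr d\<close>
      unfolding K2_def E_def t_def m_def n_def by simp
    show ?case
      unfolding t_def[symmetric]
      by (rule divide_le_of_power_bounds[OF measure_nonneg upper lower \<open>0 < K2\<close>])
        (use elim \<open>k < m\<close> in \<open>auto simp: t_def E_def\<close>)
  qed
  then show ?thesis
    unfolding k_def m_def by (rule exI)
qed

theorem lemma7p1:
  fixes \<alpha> \<beta> :: "'a::euclidean_space set" and d C1 C2 :: real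
  assumes "subspace \<alpha>" and "subspace \<beta>" and "dim \<alpha> < dim \<beta>"
    and "d > 1" and "C1 > 0" and "C2 > 0"
  shows "((\<lambda>\<epsilon>. measure lebesgue (sea_tangle d \<alpha> C1 \<inter> ball 0 \<epsilon>)
              / measure lebesgue (sea_tangle d \<beta> C2 \<inter> ball 0 \<epsilon>)) \<longlongrightarrow> 0) (at_right 0)"
proof -
  obtain K where K: "\<forall>\<^sub>F \<epsilon> in at_right 0.
    measure lebesgue (sea_tangle d \<alpha> C1 \<inter> ball 0 \<epsilon>) / measure lebesgue (sea_tangle d \<beta> C2 \<inter> ball 0 \<epsilon>)
      \<le> K * (\<epsilon> powr (d - 1)) ^ (dim \<beta> - dim \<alpha>)"
    using sea_tangle_volume_ratio_eventually_le[OF assms] by blast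
  have "((\<lambda>\<epsilon>::real. \<epsilon> powr (d - 1)) \<longlongrightarrow> 0) (at_right 0)"
    using \<open>d > 1\<close> by (intro tendsto_powr_at_right_0) simp
  then have "((\<lambda>\<epsilon>. K * (\<epsilon> powr (d - 1)) ^ (dim \<beta> - dim \<alpha>)) \<longlongrightarrow> K * 0 ^ (dim \<beta> - dim \<alpha>)) (at_right 0)"
    by (intro tendsto_intros)
  moreover have "(0::real) ^ (dim \<beta> - dim \<alpha>) = 0"
    using \<open>dim \<alpha> < dim \<beta>\<close> by (intro zero_power) simp
  ultimately have lim: "((\<lambda>\<epsilon>. K * (\<epsilon> powr (d - 1)) ^ (dim \<beta> - dim \<alpha>)) \<longlongrightarrow> 0) (at_right 0)"
    by simp
  have "\<forall>\<^sub>F \<epsilon> in at_right 0.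
    0 \<le> measure lebesgue (sea_tangle d \<alpha> C1 \<inter> ball 0 \<epsilon>) / measure lebesgue (sea_tangle d \<beta> C2 \<inter> ball 0 \<epsilon>)"
    by (intro always_eventually allI divide_nonneg_nonneg measure_nonneg)
  then show ?thesis
    using K lim by (rule tendsto_sandwich[OF _ _ tendsto_const])
qed

end
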